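(* Let $q>2$ be a prime power, $m\ge1$, $n=q^m-1$, and suppose $n=r_1r_2$ with $r_1,r_2>1$, $\gcd(r_1,r_2)=1$ and $r_1=q^a-1$ for some natural number $a$; write $m=ab$. Fix a generator $\alpha$ of $\mathbb{F}_{q^m}^*$ and a group isomorphism $T:\mathbb{Z}_n\to\mathbb{Z}_{r_1}\times\mathbb{Z}_{r_2}$. Define subsets of $\mathbb{Z}_{r_1}\times\mathbb{Z}_{r_2}$: $$\gamma_1=\left\{(i_1,i_2)\ \middle|\ 0\le i_1<\tfrac{a(a-1)}{2},\ 0\le i_2<b^2\right\},$$ $$\gamma_2=\left\{(i_1,i_2)\ \middle|\ \tfrac{a(a-1)}{2}\le i_1<\tfrac{a(a+1)}{2},\ 0\le i_2<\tfrac{b(b+1)}{2}\right\},$$ $$\gamma_3=\left\{(i_1,i_2)\ \middle|\ \tfrac{a(a+1)}{2}\le i_1<\tfrac{a(a+3)}{2},\ 0\le i_2<b\right\},$$ and $\Gamma=\gamma_1\cup\gamma_2\cup\gamma_3$. Then $T^{-1}(\Gamma)\subseteq\mathbb{Z}_n$ is a set of check positions for the punctured code $R^*_q(m(q-1)-3,m)$ (i.e. $\{\alpha^i\mid i\in T^{-1}(\Gamma)\}$ is a set of check positions of it).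
   Context: $\mathbb{F}=\mathbb{F}_q$; elements of $\mathbb{Z}_r$ are identified with integers $0,\dots,r-1$. $\mathrm{wt}_q(k)$ is the sum of the base-$q$ digits of $k$. Let $G$ be the additive group of $\mathbb{F}_{q^m}$; words of length $q^m$ are vectors in $\mathbb{F}^G$, written $bX^0+\sum_{i=0}^{n-1}a_iX^{\alpha^i}$. For $0<\rho\le m(q-1)$, the generalized Reed–Muller code $R_q(\rho,m)$ consists of the words with $b\cdot 0^s+\sum_i a_i\alpha^{is}=0$ for every $0\le s<q^m-1$ with $\mathrm{wt}_q(s)<m(q-1)-\rho$ ($0^0=1$). The punctured code $R^*_q(\rho,m)$ is obtained by deleting coordinate $X^0$; its coordinates $\alpha^i$ are indexed by $i\in\mathbb{Z}_n$. For a linear code of dimension $k$ on coordinate set $P$, an information set is $I\subseteq P$, $|I|=k$, onto which the code projects surjectively onto $\mathbb{F}^k$; a set of check positions is the complement of an information set. *)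

theory Defs
  imports "HOL-Computational_Algebra.Primes"
begin

fun wt_q :: "nat \<Rightarrow> nat \<Rightarrow> nat" where
  "wt_q q k = (if q \<le> 1 \<or> k = 0 then 0 else k mod q + wt_q q (k div q))"

declare wt_q.simps[simp del]

definition subfield_q :: "nat \<Rightarrow> 'a::field set" where
  "subfield_q q = {x. x ^ q = x}"

text \<open>Words are functions
  a :: nat => 'a with a i in F_q for i < n (coordinate alpha^i) and a i = 0 for i >= n.
  A word is in the punctured code iff it extends, by some value b in F_q at the
  coordinate X^0, to a word of R_q(rho,m). Here 0^0 = 1 as in Isabelle.\<close>
definition punctured_GRM ::
  "nat \<Rightarrow> nat \<Rightarrow> nat \<Rightarrow> 'a::field \<Rightarrow> (nat \<Rightarrow> 'a) set" where
  "punctured_GRM q m \<rho> \<alpha> =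
     {a. (\<forall>i < q^m - 1. a i \<in> subfield_q q) \<and> (\<forall>i \<ge> q^m - 1. a i = 0) \<and>
         (\<exists>b \<in> subfield_q q. \<forall>s < q^m - 1. wt_q q s < m * (q - 1) - \<rho> \<longrightarrow>
             b * 0 ^ s + (\<Sum>i < q^m - 1. a i * \<alpha> ^ (i * s)) = 0)}"

definition information_set ::
  "nat \<Rightarrow> nat set \<Rightarrow> (nat \<Rightarrow> 'a::field) set \<Rightarrow> nat set \<Rightarrow> bool" where
  "information_set q P C I \<longleftrightarrow> I \<subseteq> P \<and> card C = q ^ card I \<and>
     (\<forall>v. (\<forall>i\<in>I. v i \<in> subfield_q q) \<longrightarrow> (\<exists>c\<in>C. \<forall>i\<in>I. c i = v i))"

definition check_positions ::
  "nat \<Rightarrow> nat set \<Rightarrow> (nat \<Rightarrow> 'a::field) set \<Rightarrow> nat set \<Rightarrow> bool" where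
  "check_positions q P C J \<longleftrightarrow> J \<subseteq> P \<and> information_set q P C (P - J)"

definition Gamma_set :: "nat \<Rightarrow> nat \<Rightarrow> (nat \<times> nat) set" where
  "Gamma_set a b =
     {(i1, i2). i1 < a * (a - 1) div 2 \<and> i2 < b^2} \<union>
     {(i1, i2). a * (a - 1) div 2 \<le> i1 \<and> i1 < a * (a + 1) div 2 \<and> i2 < b * (b + 1) div 2} \<union>
     {(i1, i2). a * (a + 1) div 2 \<le> i1 \<and> i1 < a * (a + 3) div 2 \<and> i2 < b}"

end

theory Submission
  imports Defs "HOL-Number_Theory.Residues" "HOL-Computational_Algebra.Polynomial" "HOL-Library.FuncSet"
begin

(*
  A word c lies in the punctured code iff it is F_q-valued and \<Sum>_i c_i \<alpha>^(i s) = 0 for all s in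
  W = {0 < s < n | wt_q s \<le> 2}; the value at X^0 is then forced. Multiplication by q permutes W
  (it rotates base-q digits). Hence, if the square matrix (\<alpha>^(j s)) with s \<in> W, j \<in> J is
  nonsingular, the unique solution over F_(q^m) of the check equations with prescribed F_q-values
  off J is fixed by the Frobenius map, so it is F_q-valued, and the complement of J is an
  information set.

  For the nonsingularity, T j = (j1, j2) gives \<alpha>^(j s) = (\<beta>^s)^j1 (\<gamma>^s)^j2 with \<beta>, \<gamma> of orders
  r1 = q^a - 1 and r2. Writing the exponents of s = q^x + q^y (or q^x) as x = u + a z, the power
  \<beta>^s depends only on the residues u, which label a row of \<Gamma>, while within a row the
  \<gamma>^s are distinct by the Chinese remainder theorem. In this order the matrix is a staircase of
  Vandermonde blocks with non-increasing row lengths, which is nonsingular by induction on the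
  number of rows.
*)

lemma vandermonde_coeffs_eq_0:
  fixes z y :: "nat \<Rightarrow> 'a::field"
  assumes inj: "inj_on z {..<K}"
    and eqs: "\<And>j. j < K \<Longrightarrow> (\<Sum>i<K. y i * z i ^ j) = 0"
    and d: "d < K"
  shows "y d = 0"
proof -
  \<comment> \<open>Combine the equations with the coefficients of a polynomial vanishing at every node but \<open>z d\<close>.\<close>
  define P where "P = (\<Prod>i\<in>{..<K}-{d}. [:- z i, 1:])"
  have "degree P = K - 1"
    unfolding P_def using d by (subst degree_prod_eq_sum_degree) auto
  then have poly_P: "poly P x = (\<Sum>j<K. coeff P j * x ^ j)" for x
    using d by (simp add: poly_altdef) (intro sum.cong; auto)
  have "(\<Sum>i<K. y i * poly P (z i)) = (\<Sum>j<K. coeff P j * (\<Sum>i<K. y i * z i ^ j))"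
    unfolding poly_P by (simp add: sum_distrib_left mult_ac) (rule sum.swap)
  also have "\<dots> = 0"
    using eqs by simp
  finally have "(\<Sum>i<K. y i * poly P (z i)) = 0" .
  moreover have "(\<Sum>i<K. y i * poly P (z i)) = y d * poly P (z d)"
    using d by (subst sum.mono_neutral_right[of _ "{d}"]) (auto simp: P_def poly_prod)
  moreover have "poly P (z d) \<noteq> 0"
    using inj d by (auto simp: P_def poly_prod inj_on_def)
  ultimately show ?thesis
    by simp
qed

lemma staircase_vandermonde_coeffs_eq_0:
  fixes B :: "nat \<Rightarrow> 'a::field" and C :: "nat \<Rightarrow> nat \<Rightarrow> 'a" and N :: "nat \<Rightarrow> nat"
  assumes "inj_on B {..<A}"
    and "\<And>k. k < A \<Longrightarrow> inj_on (C k) {..<N k}"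
    and "\<And>k k'. k \<le> k' \<Longrightarrow> k' < A \<Longrightarrow> N k' \<le> N k"
    and "\<And>j1 j2. j1 < A \<Longrightarrow> j2 < N j1 \<Longrightarrow>
           (\<Sum>k<A. \<Sum>t<N k. y k t * B k ^ j1 * C k t ^ j2) = 0"
  shows "\<forall>k<A. \<forall>t<N k. y k t = 0"
  using assms
proof (induction A)
  case 0
  then show ?case by simp
next
  case (Suc A)
  have last_row: "y A t = 0" if "t < N A" for t
  proof (rule vandermonde_coeffs_eq_0[of "C A" "N A"])
    fix j2 assume j2: "j2 < N A"
    \<comment> \<open>As \<open>N\<close> is antitone, the equations for \<open>j2\<close> hold for all \<open>j1 \<le> A\<close>; Vandermonde in the \<open>B k\<close> isolates row \<open>A\<close>.\<close>
    show "(\<Sum>t<N A. y A t * C A t ^ j2) = 0"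
    proof (rule vandermonde_coeffs_eq_0[of B "Suc A" "\<lambda>k. \<Sum>t<N k. y k t * C k t ^ j2"])
      fix j1 assume j1: "j1 < Suc A"
      then have "j2 < N j1"
        using j2 Suc.prems(3)[of j1 A] by auto
      then show "(\<Sum>k<Suc A. (\<Sum>t<N k. y k t * C k t ^ j2) * B k ^ j1) = 0"
        using Suc.prems(4)[of j1 j2] j1 by (simp add: sum_distrib_left mult_ac)
    qed (use Suc.prems(1) in auto)
  qed (use Suc.prems(2) that in auto)
  have "\<forall>k<A. \<forall>t<N k. y k t = 0"
  proof (rule Suc.IH)
    fix j1 j2 assume "j1 < A" "j2 < N j1"
    then show "(\<Sum>k<A. \<Sum>t<N k. y k t * B k ^ j1 * C k t ^ j2) = 0"
      using Suc.prems(4)[of j1 j2] last_row by simp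
  qed (use Suc.prems in \<open>auto intro: inj_on_subset\<close>)
  then show ?case
    using last_row less_Suc_eq by auto
qed

definition square_nonsingular :: "('s \<Rightarrow> 'j \<Rightarrow> 'a::field) \<Rightarrow> 's set \<Rightarrow> 'j set \<Rightarrow> bool" where
  "square_nonsingular M S J \<longleftrightarrow> finite S \<and> finite J \<and> card S = card J \<and>
     (\<forall>x. (\<forall>j\<in>J. (\<Sum>s\<in>S. x s * M s j) = 0) \<longrightarrow> (\<forall>s\<in>S. x s = 0))"

lemma square_nonsingularD:
  "square_nonsingular M S J \<Longrightarrow> \<forall>j\<in>J. (\<Sum>s\<in>S. x s * M s j) = 0 \<Longrightarrow> s \<in> S \<Longrightarrow> x s = 0"
  by (auto simp: square_nonsingular_def)

lemma square_nonsingular_solvable: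
  fixes M :: "'s \<Rightarrow> 'j \<Rightarrow> 'a::{finite,field}"
  assumes "square_nonsingular M S J"
  shows "\<exists>x. \<forall>j\<in>J. (\<Sum>s\<in>S. x s * M s j) = v j"
proof -
  define L where "L x = restrict (\<lambda>j. \<Sum>s\<in>S. x s * M s j) J" for x
  let ?X = "S \<rightarrow>\<^sub>E (UNIV :: 'a set)" and ?Y = "J \<rightarrow>\<^sub>E (UNIV :: 'a set)"
  have "inj_on L ?X"
  proof (rule inj_onI)
    fix x x' assume x: "x \<in> ?X" and x': "x' \<in> ?X" and "L x = L x'"
    have "(\<Sum>s\<in>S. x s * M s j) = (\<Sum>s\<in>S. x' s * M s j)" if "j \<in> J" for j
      using that fun_cong[OF \<open>L x = L x'\<close>, of j] by (simp add: L_def)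
    then have "\<forall>j\<in>J. (\<Sum>s\<in>S. (x s - x' s) * M s j) = 0"
      by (simp add: algebra_simps sum_subtractf)
    then show "x = x'"
      using x x' square_nonsingularD[OF assms, of "\<lambda>s. x s - x' s"] by (intro PiE_ext) auto
  qed
  moreover have "L ` ?X \<subseteq> ?Y"
    by (auto simp: L_def)
  moreover have "finite ?Y" "card ?X = card ?Y"
    using assms by (simp_all add: square_nonsingular_def card_PiE finite_PiE)
  ultimately have "L ` ?X = ?Y"
    by (metis card_image card_subset_eq)
  then have "restrict v J \<in> L ` ?X"
    by simp
  then obtain x where x: "L x = restrict v J"
    by (metis imageE)
  have "(\<Sum>s\<in>S. x s * M s j) = v j" if "j \<in> J" for j
    using fun_cong[OF x, of j] that by (simp add: L_def)
  then show ?thesis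
    by blast
qed

lemma square_nonsingular_transpose:
  fixes M :: "'s \<Rightarrow> 'j \<Rightarrow> 'a::{finite,field}"
  assumes M: "square_nonsingular M S J"
  shows "square_nonsingular (\<lambda>j s. M s j) J S"
  unfolding square_nonsingular_def
proof (intro conjI allI impI ballI)
  fix c j0 assume c: "\<forall>s\<in>S. (\<Sum>j\<in>J. c j * M s j) = 0" and j0: "j0 \<in> J"
  obtain x where x: "\<forall>j\<in>J. (\<Sum>s\<in>S. x s * M s j) = (if j = j0 then 1 else 0)"
    using square_nonsingular_solvable[OF M, where v = "\<lambda>j. if j = j0 then 1 else 0"] by blast
  have "c j0 = (\<Sum>j\<in>J. if j = j0 then c j else 0)"
    using j0 M by (simp add: square_nonsingular_def)
  also have "\<dots> = (\<Sum>j\<in>J. c j * (\<Sum>s\<in>S. x s * M s j))"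
    using x by (intro sum.cong) auto
  also have "\<dots> = (\<Sum>s\<in>S. x s * (\<Sum>j\<in>J. c j * M s j))"
    unfolding sum_distrib_left by (subst sum.swap) (simp add: mult_ac)
  also have "\<dots> = 0"
    using c by simp
  finally show "c j0 = 0" .
qed (use M in \<open>simp_all add: square_nonsingular_def\<close>)

lemma wt_q_0 [simp]: "wt_q q 0 = 0"
  by (subst wt_q.simps) simp

lemma wt_q_rec: "1 < q \<Longrightarrow> wt_q q s = s mod q + wt_q q (s div q)"
  by (subst wt_q.simps) auto

lemma wt_q_digit: "d < q \<Longrightarrow> wt_q q d = d"
  by (subst wt_q.simps) simp

lemma wt_q_eq_0_iff:
  assumes "1 < q"
  shows "wt_q q s = 0 \<longleftrightarrow> s = 0"
proof (induction s rule: less_induct)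
  case (less s)
  show ?case
  proof (cases "s = 0")
    case False
    then have "s div q < s"
      using assms by simp
    have "wt_q q s \<noteq> 0"
    proof
      assume "wt_q q s = 0"
      then have "s mod q = 0" "s div q = 0"
        using less.IH[OF \<open>s div q < s\<close>] wt_q_rec[OF assms, of s] by simp_all
      then show False
        using False div_mult_mod_eq[of s q] by simp
    qed
    then show ?thesis
      using False by simp
  qed simp
qed

lemma wt_q_add_mult_power:
  assumes q: "1 < q" and "x < q ^ k"
  shows "wt_q q (x + q ^ k * y) = wt_q q x + wt_q q y"
  using assms(2)
proof (induction k arbitrary: x)
  case (Suc k)
  have "x div q < q ^ k"
    using Suc.prems q by (simp add: div_less_iff_less_mult mult_ac)
  moreover have "(x + q ^ Suc k * y) mod q = x mod q"
    by (simp add: mult.assoc)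
  moreover have "(x + q ^ Suc k * y) div q = x div q + q ^ k * y"
    using q by (simp add: mult.assoc)
  ultimately show ?case
    using Suc.IH wt_q_rec[OF q, of "x + q ^ Suc k * y"] wt_q_rec[OF q, of x] by simp
qed simp

lemma wt_q_power: "1 < q \<Longrightarrow> wt_q q (q ^ x) = 1"
  using wt_q_add_mult_power[of q 0 x 1] wt_q_digit[of 1 q] by simp

lemma wt_q_power_add_power:
  assumes q: "2 < q"
  shows "wt_q q (q ^ x + q ^ y) = 2"
proof -
  have ordered: "wt_q q (q ^ x + q ^ y) = 2" if "x \<le> y" for x y
  proof (cases "x = y")
    case True
    then show ?thesis
      using q wt_q_add_mult_power[of q 0 x 2] wt_q_digit[of 2 q] by (simp add: mult_2_right)
  next
    case False
    then have "q ^ x < q ^ y"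
      using that q by (simp add: power_strict_increasing)
    then show ?thesis
      using q wt_q_add_mult_power[of q "q ^ x" y 1] wt_q_power[of q x] wt_q_digit[of 1 q] by simp
  qed
  show ?thesis
    using ordered[of x y] ordered[of y x] by (cases "x \<le> y") (simp_all add: add.commute)
qed

lemma wt_q_le_1_cases:
  assumes q: "1 < q" and "0 < s" and "wt_q q s \<le> 1"
  shows "\<exists>x. s = q ^ x"
  using assms(2,3)
proof (induction s rule: less_induct)
  case (less s)
  have s_eq: "s = s mod q + q * (s div q)" and wt_s: "wt_q q s = s mod q + wt_q q (s div q)"
    using wt_q_rec[OF q, of s] by simp_all
  show ?case
  proof (cases "s mod q = 0")
    case True
    then have "0 < s div q" "wt_q q (s div q) \<le> 1" "s div q < s"
      using less.prems s_eq wt_s q by auto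
    then obtain x where "s div q = q ^ x"
      using less.IH by blast
    then have "s = q ^ Suc x"
      using s_eq True by simp
    then show ?thesis ..
  next
    case False
    then have "s div q = 0"
      using less.prems wt_s wt_q_eq_0_iff[OF q, of "s div q"] by simp
    then have "s = q ^ 0"
      using s_eq False less.prems wt_s by simp
    then show ?thesis ..
  qed
qed

lemma one_or_two_powers_mult:
  fixes q s :: nat
  assumes "(\<exists>x. s = q ^ x) \<or> (\<exists>x y. x \<le> y \<and> s = q ^ x + q ^ y)"
  shows "(\<exists>x. q * s = q ^ x) \<or> (\<exists>x y. x \<le> y \<and> q * s = q ^ x + q ^ y)"
  using assms
proof (elim disjE exE conjE)
  fix x assume "s = q ^ x"
  then have "q * s = q ^ Suc x"
    by simp
  then show ?thesis by blast
next
  fix x y assume "x \<le> y" "s = q ^ x + q ^ y"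
  then have "Suc x \<le> Suc y \<and> q * s = q ^ Suc x + q ^ Suc y"
    by (simp add: algebra_simps)
  then show ?thesis by blast
qed

lemma wt_q_le_2_cases:
  assumes q: "2 < q" and "0 < s" and "wt_q q s \<le> 2"
  shows "(\<exists>x. s = q ^ x) \<or> (\<exists>x y. x \<le> y \<and> s = q ^ x + q ^ y)"
  using assms(2,3)
proof (induction s rule: less_induct)
  case (less s)
  define r s' where "r = s mod q" and "s' = s div q"
  have s_eq: "s = r + q * s'" and wt_s: "wt_q q s = r + wt_q q s'"
    using wt_q_rec[of q s] q by (simp_all add: r_def s'_def)
  consider "r = 0" | "r = 1" | "r = 2"
    using wt_s less.prems by linarith
  then show ?case
  proof cases
    case 1
    then have "s = q * s'"
      using s_eq by simp
    then have "0 < s'"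
      using less.prems by (cases "s' = 0") auto
    moreover have "wt_q q s' \<le> 2" "s' < s"
      using less.prems wt_s 1 q by (simp_all add: s'_def)
    ultimately have "(\<exists>x. s' = q ^ x) \<or> (\<exists>x y. x \<le> y \<and> s' = q ^ x + q ^ y)"
      using less.IH by blast
    then show ?thesis
      using one_or_two_powers_mult \<open>s = q * s'\<close> by simp
  next
    case 2
    show ?thesis
    proof (cases "s' = 0")
      case True
      then have "s = q ^ 0"
        using s_eq 2 by simp
      then show ?thesis by blast
    next
      case False
      then obtain x where "s' = q ^ x"
        using wt_q_le_1_cases[of q s'] q wt_s less.prems 2 by auto
      then have "0 \<le> Suc x \<and> s = q ^ 0 + q ^ Suc x"
        using s_eq 2 by simp
      then show ?thesis by blast
    qed
  next
    case 3
    then have "s' = 0"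
      using wt_s less.prems wt_q_eq_0_iff[of q s'] q by simp
    then have "(0::nat) \<le> 0 \<and> s = q ^ 0 + q ^ 0"
      using s_eq 3 by simp
    then show ?thesis by blast
  qed
qed

lemma rotate_digits_less:
  fixes q Q d s' :: nat
  assumes "s' < Q" "d < q" "s' + Q * d < q * Q - 1"
  shows "q * s' + d < q * Q - 1"
proof (rule ccontr)
  assume "\<not> ?thesis"
  moreover have "q * s' + q \<le> q * Q"
    using \<open>s' < Q\<close> mult_le_mono2[of "s' + 1" Q q] by simp
  \<comment> \<open>Then all digits are maximal: \<open>d = q - 1\<close> and \<open>s' = Q - 1\<close>.\<close>
  ultimately have "d + 1 = q" and "q * (s' + 1) = q * Q"
    using \<open>d < q\<close> by (simp_all add: algebra_simps)
  from this(2) have "s' + 1 = Q"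
    using \<open>d < q\<close> by (simp only: mult_cancel_left) simp
  have "s' + Q * d + 1 = Q + Q * d"
    using \<open>s' + 1 = Q\<close> by simp
  also have "\<dots> = q * Q"
    using \<open>d + 1 = q\<close>[symmetric] by simp
  finally show False
    using assms(3) by simp
qed

lemma wt_q_rotate:
  assumes q: "1 < q" and m: "0 < m" and s: "s < q ^ m - 1"
  shows "wt_q q ((q * s) mod (q ^ m - 1)) = wt_q q s"
proof -
  define Q where "Q = q ^ (m - 1)"
  define d s' where "d = s div Q" and "s' = s mod Q"
  have qQ: "q ^ m = q * Q"
    using m by (simp add: Q_def power_eq_if)
  have "0 < Q"
    using q by (simp add: Q_def)
  then have s_eq: "s = s' + Q * d" and "s' < Q"
    by (simp_all add: d_def s'_def)
  have "d < q"
    using s qQ \<open>0 < Q\<close> by (simp add: d_def div_less_iff_less_mult mult.commute)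
  \<comment> \<open>Multiplication by \<open>q\<close> rotates the base-\<open>q\<close> digits: \<open>s = s' + Q d\<close> becomes \<open>d + q s'\<close>.\<close>
  have rot: "q * s = (q * s' + d) + (q ^ m - 1) * d"
  proof -
    have "q ^ m = (q ^ m - 1) + 1"
      using q by simp
    then have "q * s = q * s' + ((q ^ m - 1) + 1) * d"
      using qQ s_eq by (simp add: algebra_simps)
    then show ?thesis
      by (simp add: algebra_simps)
  qed
  have "q * s' + d < q ^ m - 1"
    using rotate_digits_less[OF \<open>s' < Q\<close> \<open>d < q\<close>] s s_eq qQ by simp
  then have "(q * s) mod (q ^ m - 1) = d + q ^ 1 * s'"
    by (simp add: rot)
  then show ?thesis
    using wt_q_add_mult_power[of q d 1 s'] wt_q_add_mult_power[of q s' "m - 1" d] q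
      \<open>d < q\<close> \<open>s' < Q\<close> s_eq
    by (simp add: Q_def wt_q_digit \<open>d < q\<close>)
qed

lemma dvd_power_add_power_iff:
  fixes q :: nat
  assumes q: "2 < q" and "x \<le> y"
  shows "q dvd q ^ x + q ^ y \<longleftrightarrow> 0 < x"
proof (cases x)
  case 0
  have "\<not> q dvd 1 + q ^ y"
  proof (cases y)
    case 0
    then show ?thesis
      using q by (simp add: nat_dvd_not_less)
  next
    case (Suc k)
    then have "q dvd q ^ y"
      by simp
    then show ?thesis
      using q dvd_add_left_iff[of q "q ^ y" 1] by auto
  qed
  then show ?thesis
    using 0 by simp
qed (use assms in \<open>auto intro: dvd_power_le\<close>)

lemma power_add_power_inject:
  fixes q :: nat
  assumes q: "2 < q"
  shows "x \<le> y \<Longrightarrow> x' \<le> y' \<Longrightarrow> q ^ x + q ^ y = q ^ x' + q ^ y' \<Longrightarrow> x = x' \<and> y = y'"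
proof (induction x arbitrary: x' y y')
  case 0
  then have "x' = 0"
    using dvd_power_add_power_iff[OF q, of 0 y] dvd_power_add_power_iff[OF q, of x' y'] by simp
  then show ?case
    using 0 q by (simp add: power_inject_exp)
next
  case (Suc x)
  then have "0 < x'"
    using dvd_power_add_power_iff[OF q, of "Suc x" y] dvd_power_add_power_iff[OF q, of x' y']
    by simp
  then obtain x0 y0 y0' where x0: "x' = Suc x0" "y = Suc y0" "y' = Suc y0'"
    using Suc.prems by (metis Suc_le_D gr0_implies_Suc)
  then have "q * (q ^ x + q ^ y0) = q * (q ^ x0 + q ^ y0')"
    using Suc.prems(3) by (simp add: algebra_simps)
  then have "q ^ x + q ^ y0 = q ^ x0 + q ^ y0'"
    using q by simp
  then show ?case
    using Suc.IH[of y0 x0 y0'] Suc.prems x0 by simp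
qed

lemma power_add_power_eq_cases:
  fixes q :: nat
  assumes q: "2 < q" and eq: "q ^ x + q ^ y = q ^ x' + q ^ y'"
  shows "(x = x' \<and> y = y') \<or> (x = y' \<and> y = x')"
  using power_add_power_inject[OF q, of x y x' y'] power_add_power_inject[OF q, of y x x' y']
    power_add_power_inject[OF q, of x y y' x'] power_add_power_inject[OF q, of y x y' x'] eq
  by (cases "x \<le> y"; cases "x' \<le> y'") (auto simp: add.commute)

lemma power_neq_power_add_power: "2 < q \<Longrightarrow> q ^ x \<noteq> q ^ y + (q::nat) ^ z"
  using wt_q_power[of q x] wt_q_power_add_power[of q y z] by auto

lemma power_add_power_le:
  fixes q :: nat
  assumes q: "2 < q" and "u < a" "v < a"
  shows "q ^ u + q ^ v \<le> q ^ a - 1"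
proof -
  have "q ^ u \<le> q ^ (a - 1)" "q ^ v \<le> q ^ (a - 1)"
    using assms by (auto intro: power_increasing)
  moreover have "3 * q ^ (a - 1) \<le> q ^ a"
    using q \<open>u < a\<close> by (cases a) auto
  moreover have "1 \<le> q ^ (a - 1)"
    using q by simp
  ultimately show ?thesis
    by linarith
qed

lemma power_add_power_less:
  fixes q :: nat
  assumes q: "2 < q" and "u < a" "v < a" and "2 \<le> a"
  shows "q ^ u + q ^ v < q ^ a - 1"
proof -
  have "q ^ u \<le> q ^ (a - 1)" "q ^ v \<le> q ^ (a - 1)"
    using assms by (auto intro: power_increasing)
  moreover have "3 * q ^ (a - 1) \<le> q ^ a"
    using q \<open>u < a\<close> by (cases a) auto
  moreover have "q \<le> q ^ (a - 1)"
    using q \<open>2 \<le> a\<close> power_increasing[of 1 "a - 1" q] by simp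
  ultimately show ?thesis
    using q by linarith
qed

lemma power_add_mult_mod:
  fixes q :: nat
  assumes "0 < q"
  shows "q ^ (u + a * z) mod (q ^ a - 1) = q ^ u mod (q ^ a - 1)"
proof -
  have "q ^ a mod (q ^ a - 1) = ((q ^ a - 1) + 1) mod (q ^ a - 1)"
    using assms by simp
  also have "\<dots> = 1 mod (q ^ a - 1)"
    by (rule mod_add_self1)
  finally have "[q ^ a = 1] (mod q ^ a - 1)"
    by (simp only: cong_def)
  then have "[q ^ u * (q ^ a) ^ z = q ^ u * 1 ^ z] (mod q ^ a - 1)"
    by (intro cong_mult cong_pow cong_refl)
  then show ?thesis
    by (simp add: cong_def power_add power_mult)
qed

lemma add_mult_less_mult: "u < a \<Longrightarrow> z < b \<Longrightarrow> u + a * z < a * (b::nat)"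
  using mult_le_mono2[of "Suc z" b a] by simp

lemma mod_eq_imp_eq_atLeastAtMost:
  fixes x y r :: nat
  assumes "x \<in> {1..r}" "y \<in> {1..r}" "x mod r = y mod r"
  shows "x = y"
  using assms by (cases "x = r"; cases "y = r") auto

lemma add_self_mod_eq_self: "x < r \<Longrightarrow> (x + x) mod r = x \<Longrightarrow> x = (0::nat)"
  by (cases "x + x < r") (auto simp: mod_if split: if_splits)

fun tri :: "nat \<Rightarrow> nat" where
  "tri 0 = 0"
| "tri (Suc l) = tri l + Suc l"

lemma tri_eq: "tri l = l * (l + 1) div 2"
  by (induction l) auto

lemma tri_mono: "l \<le> l' \<Longrightarrow> tri l \<le> tri l'"
  by (induction l') (auto simp: le_Suc_eq)

lemma tri_bounds: "b \<le> tri b" "tri b \<le> b ^ 2"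
  by (induction b) (auto simp: power2_eq_square)

lemma tri_add_less_tri_iff: "k \<le> l \<Longrightarrow> tri l + k < tri N \<longleftrightarrow> l < N"
  using tri_mono[of N l] tri_mono[of "Suc l" N] by (cases "l < N") auto

lemma tri_add_inject:
  assumes "k \<le> l" "k' \<le> l'" "tri l + k = tri l' + k'"
  shows "k = k' \<and> l = l'"
proof -
  have "\<not> l < l'" "\<not> l' < l"
    using assms tri_add_less_tri_iff[of k l l'] tri_add_less_tri_iff[of k' l' l] by auto
  then show ?thesis
    using assms(3) by simp
qed

lemma ex_tri_add: "\<exists>k l. k \<le> l \<and> z = tri l + k"
proof (induction z)
  case 0
  then show ?case
    by (intro exI[of _ 0]) simp
next
  case (Suc z)
  then obtain k l where "k \<le> l" "z = tri l + k"
    by blast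
  show ?case
  proof (cases "k < l")
    case True
    then have "Suc k \<le> l \<and> Suc z = tri l + Suc k"
      using \<open>z = tri l + k\<close> by simp
    then show ?thesis by blast
  next
    case False
    then have "0 \<le> Suc l \<and> Suc z = tri (Suc l) + 0"
      using \<open>k \<le> l\<close> \<open>z = tri l + k\<close> by simp
    then show ?thesis by blast
  qed
qed

definition untri :: "nat \<Rightarrow> nat \<times> nat" where
  "untri z = (SOME (k, l). k \<le> l \<and> z = tri l + k)"

lemma untri: "fst (untri z) \<le> snd (untri z)" "tri (snd (untri z)) + fst (untri z) = z"
proof -
  have "\<exists>p. case p of (k, l) \<Rightarrow> k \<le> l \<and> z = tri l + k"
    using ex_tri_add by auto
  then have "case untri z of (k, l) \<Rightarrow> k \<le> l \<and> z = tri l + k"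
    unfolding untri_def by (rule someI_ex)
  then show "fst (untri z) \<le> snd (untri z)" "tri (snd (untri z)) + fst (untri z) = z"
    by (simp_all add: case_prod_beta)
qed

lemma untri_tri_add: "k \<le> l \<Longrightarrow> untri (tri l + k) = (k, l)"
proof -
  assume "k \<le> l"
  obtain k' l' where u: "untri (tri l + k) = (k', l')"
    by fastforce
  then have "k' \<le> l'" "tri l' + k' = tri l + k"
    using untri[of "tri l + k"] by simp_all
  then show ?thesis
    using u tri_add_inject[of k' l' k l] \<open>k \<le> l\<close> by simp
qed

lemma power_eq_power_mod: "(x::'a::monoid_mult) ^ n = 1 \<Longrightarrow> x ^ k = x ^ (k mod n)"
proof -
  assume "x ^ n = 1"
  have "x ^ k = x ^ (n * (k div n) + k mod n)"
    by simp
  also have "\<dots> = (x ^ n) ^ (k div n) * x ^ (k mod n)"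
    by (simp only: power_add power_mult)
  finally show ?thesis
    using \<open>x ^ n = 1\<close> by simp
qed

lemma field_power_card_minus_1:
  fixes x :: "'a::{finite,field}"
  assumes "x \<noteq> 0"
  shows "x ^ (card (UNIV :: 'a set) - 1) = 1"
proof -
  let ?U = "UNIV - {0::'a}"
  have "(\<Prod>y\<in>?U. x * y) = (\<Prod>y\<in>?U. y)"
    by (rule prod.reindex_bij_witness[of _ "\<lambda>y. y / x" "\<lambda>y. x * y"]) (use assms in auto)
  moreover have "(\<Prod>y\<in>?U. x * y) = x ^ card ?U * (\<Prod>y\<in>?U. y)"
    by (simp add: prod.distrib)
  moreover have "(\<Prod>y\<in>?U. y) \<noteq> 0" "card ?U = card (UNIV :: 'a set) - 1"
    by (simp_all add: card_Diff_singleton)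
  ultimately show ?thesis
    by simp
qed

lemma prime_CHAR_finite_field: "prime CHAR('a::{finite,field})"
  by (simp add: finite_imp_CHAR_pos prime_CHAR_semidom)

locale finite_field_generator =
  fixes q m :: nat and \<alpha> :: "'K::{finite,field}"
  assumes prime_power: "\<exists>p k. prime p \<and> k > 0 \<and> q = p ^ k"
    and card_K: "card (UNIV :: 'K set) = q ^ m"
    and \<alpha>_nonzero: "\<alpha> \<noteq> 0"
    and \<alpha>_generates: "\<forall>x::'K. x \<noteq> 0 \<longrightarrow> (\<exists>k. x = \<alpha> ^ k)"
begin

definition n :: nat where "n = q ^ m - 1"

abbreviation F :: "'K set" where "F \<equiv> subfield_q q"

lemma q_gt_1: "1 < q"
  using prime_power by (metis one_less_power prime_gt_1_nat)

lemma card_nonzero: "card (UNIV - {0::'K}) = n"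
  using card_K by (simp add: n_def card_Diff_singleton)

lemma n_pos: "0 < n"
proof -
  have "{0, 1} \<subseteq> (UNIV :: 'K set)"
    by simp
  then have "2 \<le> card (UNIV :: 'K set)"
    using card_mono[of UNIV "{0, 1 :: 'K}"] by simp
  then show ?thesis
    using card_K by (simp add: n_def)
qed

lemma m_pos: "0 < m"
  using n_pos unfolding n_def by (cases m) simp_all

lemma \<alpha>_power_n: "\<alpha> ^ n = 1"
  using field_power_card_minus_1[OF \<alpha>_nonzero] card_K by (simp add: n_def)

lemma \<alpha>_order_ge: "0 < d \<Longrightarrow> \<alpha> ^ d = 1 \<Longrightarrow> n \<le> d"
proof -
  assume "0 < d" "\<alpha> ^ d = 1"
  have "UNIV - {0::'K} \<subseteq> (\<lambda>k. \<alpha> ^ k) ` {..<d}"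
  proof
    fix x :: 'K assume "x \<in> UNIV - {0}"
    then obtain k where "x = \<alpha> ^ k"
      using \<alpha>_generates by blast
    then have "x = \<alpha> ^ (k mod d)"
      using power_eq_power_mod[OF \<open>\<alpha> ^ d = 1\<close>] by simp
    then show "x \<in> (\<lambda>k. \<alpha> ^ k) ` {..<d}"
      using \<open>0 < d\<close> by auto
  qed
  then have "card (UNIV - {0::'K}) \<le> card {..<d}"
    by (rule surj_card_le[rotated]) simp
  then show "n \<le> d"
    using card_nonzero by simp
qed

lemma \<alpha>_power_eq_iff: "\<alpha> ^ x = \<alpha> ^ y \<longleftrightarrow> x mod n = y mod n"
proof -
  have mod_n: "\<alpha> ^ k = \<alpha> ^ (k mod n)" for k
    using power_eq_power_mod[OF \<alpha>_power_n] .
  have ordered: "i = j" if "i \<le> j" "j < n" "\<alpha> ^ i = \<alpha> ^ j" for i j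
  proof (rule ccontr)
    assume "i \<noteq> j"
    have "\<alpha> ^ j = \<alpha> ^ i * \<alpha> ^ (j - i)"
      using \<open>i \<le> j\<close> by (simp flip: power_add)
    then have "\<alpha> ^ (j - i) = 1"
      using that(3) \<alpha>_nonzero by simp
    then show False
      using \<alpha>_order_ge[of "j - i"] \<open>i \<noteq> j\<close> that by simp
  qed
  have "\<alpha> ^ (x mod n) = \<alpha> ^ (y mod n) \<longleftrightarrow> x mod n = y mod n"
    using ordered[of "x mod n" "y mod n"] ordered[of "y mod n" "x mod n"] n_pos
    by (cases "x mod n \<le> y mod n") auto
  then show ?thesis
    using mod_n[of x] mod_n[of y] by simp
qed

lemma q_power_of_CHAR: "\<exists>k. q = CHAR('K) ^ k"
proof -
  obtain p k where pk: "prime p" "q = p ^ k"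
    using prime_power by blast
  have "prime CHAR('K)"
    by (rule prime_CHAR_finite_field)
  moreover have "CHAR('K) dvd p ^ (k * m)"
    using CHAR_dvd_CARD[where 'a = 'K] card_K pk by (simp add: power_mult)
  ultimately have "CHAR('K) = p"
    using pk(1) prime_dvd_power primes_dvd_imp_eq by blast
  then show ?thesis
    using pk by blast
qed

lemma frobenius_add: "(x + y :: 'K) ^ q = x ^ q + y ^ q"
  using q_power_of_CHAR prime_CHAR_finite_field freshmans_dream' by blast

lemma frobenius_sum: "sum (f :: _ \<Rightarrow> 'K) A ^ q = (\<Sum>i\<in>A. f i ^ q)"
  using q_power_of_CHAR prime_CHAR_finite_field freshmans_dream_sum' by blast

lemma frobenius_uminus: "(- x :: 'K) ^ q = - (x ^ q)"
  using frobenius_add[of x "- x"] q_gt_1 by (simp add: power_0_left eq_neg_iff_add_eq_0 add.commute)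

lemma subfield_q_iff: "x \<in> F \<longleftrightarrow> x ^ q = x"
  by (simp add: subfield_q_def)

lemma subfield_q_0: "0 \<in> F"
  using q_gt_1 by (simp add: subfield_q_iff)

lemma subfield_q_uminus: "x \<in> F \<Longrightarrow> - x \<in> F"
  by (simp add: subfield_q_iff frobenius_uminus)

lemma subfield_q_sum: "(\<And>i. i \<in> A \<Longrightarrow> f i \<in> F) \<Longrightarrow> sum f A \<in> F"
  by (simp add: subfield_q_iff frobenius_sum)

lemma card_subfield_q_le: "card F \<le> q"
proof -
  define P :: "'K poly" where "P = monom 1 q + [:0, -1:]"
  have "degree P = q"
    using q_gt_1 by (simp add: P_def degree_add_eq_left degree_monom_eq)
  moreover have "F = {x. poly P x = 0}"
    by (auto simp: P_def subfield_q_iff poly_monom)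
  ultimately show ?thesis
    using card_poly_roots_bound[of P] q_gt_1 by fastforce
qed

lemma card_subfield_q_ge: "q \<le> card F"
proof -
  \<comment> \<open>The \<open>q - 1\<close> powers of \<open>\<alpha>^t\<close>, where \<open>n = (q - 1) t\<close>, are distinct nonzero elements of \<open>F\<close>.\<close>
  have "[q ^ m = 1 ^ m] (mod q - 1)"
    using q_gt_1 by (intro cong_pow) (simp add: cong_def mod_if)
  then obtain t where t: "n = (q - 1) * t"
    using cong_to_1_nat by (fastforce simp: n_def)
  then have "0 < t"
    using n_pos by (cases t) auto
  define g where "g j = \<alpha> ^ (t * j)" for j
  have "g j \<in> F" for j
  proof -
    have "t * j * q = t * j + n * j"
      using t q_gt_1 by (cases q) (auto simp: algebra_simps)
    then have "g j ^ q = \<alpha> ^ (t * j) * (\<alpha> ^ n) ^ j"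
      by (simp add: g_def power_add flip: power_mult)
    then show ?thesis
      using \<alpha>_power_n by (simp add: g_def subfield_q_iff)
  qed
  then have "insert 0 (g ` {..<q - 1}) \<subseteq> F"
    using subfield_q_0 by auto
  moreover have "inj_on g {..<q - 1}"
  proof (rule inj_onI)
    fix i j assume "i \<in> {..<q - 1}" "j \<in> {..<q - 1}" "g i = g j"
    then have "t * i = t * j"
      using \<alpha>_power_eq_iff[of "t * i" "t * j"] t \<open>0 < t\<close> by (simp add: g_def mult.commute)
    then show "i = j"
      using \<open>0 < t\<close> by simp
  qed
  moreover have "0 \<notin> g ` {..<q - 1}"
    using \<alpha>_nonzero by (auto simp: g_def)
  ultimately show ?thesis
    using card_mono[of F "insert 0 (g ` {..<q - 1})"] card_image q_gt_1 by fastforce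
qed

lemma card_subfield_q: "card F = q"
  using card_subfield_q_le card_subfield_q_ge by (rule antisym)

definition cyclic_code :: "nat set \<Rightarrow> (nat \<Rightarrow> 'K) set" where
  "cyclic_code S = {c. (\<forall>i<n. c i \<in> F) \<and> (\<forall>i\<ge>n. c i = 0) \<and>
     (\<forall>s\<in>S. (\<Sum>i<n. c i * \<alpha> ^ (i * s)) = 0)}"

lemma punctured_GRM_eq_cyclic_code:
  "punctured_GRM q m \<rho> \<alpha> = cyclic_code {s. 0 < s \<and> s < n \<and> wt_q q s < m * (q - 1) - \<rho>}"
proof (intro subset_antisym subsetI)
  fix c assume "c \<in> punctured_GRM q m \<rho> \<alpha>"
  then show "c \<in> cyclic_code {s. 0 < s \<and> s < n \<and> wt_q q s < m * (q - 1) - \<rho>}"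
    unfolding punctured_GRM_def cyclic_code_def n_def by (auto simp: power_0_left)
next
  fix c assume c: "c \<in> cyclic_code {s. 0 < s \<and> s < n \<and> wt_q q s < m * (q - 1) - \<rho>}"
  \<comment> \<open>The value at the deleted coordinate \<open>X\<^sup>0\<close> is forced by the equation for \<open>s = 0\<close>.\<close>
  define b where "b = - (\<Sum>i<n. c i)"
  have "b \<in> F"
    using c by (auto simp: b_def cyclic_code_def intro!: subfield_q_uminus subfield_q_sum)
  moreover have "\<forall>s<n. wt_q q s < m * (q - 1) - \<rho> \<longrightarrow> b * 0 ^ s + (\<Sum>i<n. c i * \<alpha> ^ (i * s)) = 0"
    using c by (auto simp: b_def cyclic_code_def power_0_left)
  ultimately show "c \<in> punctured_GRM q m \<rho> \<alpha>"
    using c unfolding punctured_GRM_def cyclic_code_def n_def by blast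
qed

lemma coprime_q_n: "coprime q n"
proof -
  have "coprime (q ^ m) n"
    using q_gt_1 unfolding n_def by (intro coprime_diff_one_right_nat) simp
  then show ?thesis
    using m_pos by simp
qed

context
  fixes S J :: "nat set"
  assumes S_sub: "S \<subseteq> {..<n}"
    and S_closed: "\<And>s. s \<in> S \<Longrightarrow> (q * s) mod n \<in> S"
    and J_sub: "J \<subseteq> {..<n}"
    and nonsingular: "square_nonsingular (\<lambda>s j. \<alpha> ^ (j * s)) S J"
begin

lemma nonsingular_transpose: "square_nonsingular (\<lambda>j s. \<alpha> ^ (j * s)) J S"
  using square_nonsingular_transpose[OF nonsingular] by simp

lemma sum_below_n_split: "(\<Sum>i<n. f i) = (\<Sum>i\<in>{..<n} - J. f i) + (\<Sum>i\<in>J. f i)"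
  using sum.subset_diff[OF J_sub] by simp

lemma q_mult_mod_image: "(\<lambda>s. (q * s) mod n) ` S = S"
proof (rule endo_inj_surj)
  show "finite S"
    using S_sub finite_subset by blast
  show "inj_on (\<lambda>s. (q * s) mod n) S"
  proof (rule inj_onI)
    fix s s' assume "s \<in> S" "s' \<in> S" "(q * s) mod n = (q * s') mod n"
    then have "[s = s'] (mod n)"
      using cong_mult_lcancel_nat[OF coprime_q_n] by (simp add: cong_def)
    moreover have "s < n" "s' < n"
      using \<open>s \<in> S\<close> \<open>s' \<in> S\<close> S_sub by auto
    ultimately show "s = s'"
      by (simp add: cong_def)
  qed
qed (use S_closed in auto)

lemma cyclic_code_eq_if_eq_outside:
  assumes c: "c \<in> cyclic_code S" and c': "c' \<in> cyclic_code S"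
    and eq: "\<forall>i\<in>{..<n} - J. c i = c' i"
  shows "c = c'"
proof -
  have "\<forall>s\<in>S. (\<Sum>j\<in>J. (c j - c' j) * \<alpha> ^ (j * s)) = 0"
  proof
    fix s assume "s \<in> S"
    have "(\<Sum>i<n. (c i - c' i) * \<alpha> ^ (i * s)) = 0"
      using c c' \<open>s \<in> S\<close> by (simp add: cyclic_code_def left_diff_distrib sum_subtractf)
    then show "(\<Sum>j\<in>J. (c j - c' j) * \<alpha> ^ (j * s)) = 0"
      using eq by (simp add: sum_below_n_split)
  qed
  then have "\<forall>j\<in>J. c j - c' j = 0"
    using square_nonsingularD[OF nonsingular_transpose, of "\<lambda>j. c j - c' j"] by blast
  show "c = c'"
  proof
    fix i
    show "c i = c' i"
      using \<open>\<forall>j\<in>J. c j - c' j = 0\<close> eq c c'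
      by (cases "i < n"; cases "i \<in> J") (auto simp: cyclic_code_def)
  qed
qed

lemma solution_subfield_valued:
  assumes v: "\<forall>i\<in>{..<n} - J. v i \<in> F"
    and c: "\<forall>s\<in>S. (\<Sum>j\<in>J. c j * \<alpha> ^ (j * s)) = - (\<Sum>i\<in>{..<n} - J. v i * \<alpha> ^ (i * s))"
  shows "\<forall>j\<in>J. c j \<in> F"
proof -
  \<comment> \<open>Raising to the \<open>q\<close>-th power permutes the equations (as \<open>S\<close> is closed under \<open>s \<mapsto> q s\<close>) and
    fixes the right-hand sides, so \<open>c j ^ q\<close> is a solution too; by uniqueness \<open>c\<close> is \<open>F\<close>-valued.\<close>
  have "\<forall>s'\<in>S. (\<Sum>j\<in>J. c j ^ q * \<alpha> ^ (j * s')) = - (\<Sum>i\<in>{..<n} - J. v i * \<alpha> ^ (i * s'))"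
  proof
    fix s' assume "s' \<in> S"
    then obtain s where "s \<in> S" and s': "s' = (q * s) mod n"
      using q_mult_mod_image by blast
    have frob: "\<alpha> ^ (i * s') = (\<alpha> ^ (i * s)) ^ q" for i
      unfolding s' \<alpha>_power_eq_iff power_mult[symmetric] by (simp add: mod_mult_right_eq mult_ac)
    have "(\<Sum>j\<in>J. c j ^ q * \<alpha> ^ (j * s')) = (\<Sum>j\<in>J. c j * \<alpha> ^ (j * s)) ^ q"
      by (simp add: frob frobenius_sum power_mult_distrib)
    also have "\<dots> = - ((\<Sum>i\<in>{..<n} - J. v i * \<alpha> ^ (i * s)) ^ q)"
      using c \<open>s \<in> S\<close> by (simp add: frobenius_uminus)
    also have "\<dots> = - (\<Sum>i\<in>{..<n} - J. v i * \<alpha> ^ (i * s'))"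
      using v by (simp add: frob frobenius_sum power_mult_distrib subfield_q_iff)
    finally show "(\<Sum>j\<in>J. c j ^ q * \<alpha> ^ (j * s')) = - (\<Sum>i\<in>{..<n} - J. v i * \<alpha> ^ (i * s'))" .
  qed
  then have "\<forall>s\<in>S. (\<Sum>j\<in>J. (c j ^ q - c j) * \<alpha> ^ (j * s)) = 0"
    using c by (simp add: left_diff_distrib sum_subtractf)
  then show ?thesis
    using square_nonsingularD[OF nonsingular_transpose, of "\<lambda>j. c j ^ q - c j"]
    by (simp add: subfield_q_iff)
qed

lemma cyclic_code_extend:
  assumes v: "\<forall>i\<in>{..<n} - J. v i \<in> F"
  shows "\<exists>c\<in>cyclic_code S. \<forall>i\<in>{..<n} - J. c i = v i"
proof -
  let ?I = "{..<n} - J"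
  obtain c0 where c0: "\<forall>s\<in>S. (\<Sum>j\<in>J. c0 j * \<alpha> ^ (j * s)) = - (\<Sum>i\<in>?I. v i * \<alpha> ^ (i * s))"
    using square_nonsingular_solvable[OF nonsingular_transpose,
        where v = "\<lambda>s. - (\<Sum>i\<in>?I. v i * \<alpha> ^ (i * s))"] by blast
  define c where "c i = (if i \<in> ?I then v i else if i \<in> J then c0 i else 0)" for i
  have "c \<in> cyclic_code S"
    unfolding cyclic_code_def
  proof (intro CollectI conjI allI impI ballI)
    fix i assume "i < n"
    then show "c i \<in> F"
      using v solution_subfield_valued[OF v c0] by (auto simp: c_def)
  next
    fix i assume "n \<le> i"
    then show "c i = 0"
      using J_sub by (auto simp: c_def)
  next
    fix s assume "s \<in> S"
    then have "(\<Sum>j\<in>J. c j * \<alpha> ^ (j * s)) = - (\<Sum>i\<in>?I. c i * \<alpha> ^ (i * s))"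
      using c0 by (simp add: c_def)
    then show "(\<Sum>i<n. c i * \<alpha> ^ (i * s)) = 0"
      by (simp add: sum_below_n_split)
  qed
  moreover have "\<forall>i\<in>?I. c i = v i"
    by (simp add: c_def)
  ultimately show ?thesis
    by blast
qed

lemma card_cyclic_code: "card (cyclic_code S) = q ^ card ({..<n} - J)"
proof -
  let ?I = "{..<n} - J"
  have "bij_betw (\<lambda>c. restrict c ?I) (cyclic_code S) (?I \<rightarrow>\<^sub>E F)"
  proof (rule bij_betw_imageI)
    show "inj_on (\<lambda>c. restrict c ?I) (cyclic_code S)"
      by (rule inj_onI) (metis cyclic_code_eq_if_eq_outside restrict_apply')
    show "(\<lambda>c. restrict c ?I) ` cyclic_code S = ?I \<rightarrow>\<^sub>E F"
    proof
      show "(\<lambda>c. restrict c ?I) ` cyclic_code S \<subseteq> ?I \<rightarrow>\<^sub>E F"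
      proof (rule image_subsetI)
        fix c assume "c \<in> cyclic_code S"
        then show "restrict c ?I \<in> ?I \<rightarrow>\<^sub>E F"
          by (simp add: cyclic_code_def restrict_PiE_iff)
      qed
      show "?I \<rightarrow>\<^sub>E F \<subseteq> (\<lambda>c. restrict c ?I) ` cyclic_code S"
      proof
        fix v assume v: "v \<in> ?I \<rightarrow>\<^sub>E F"
        then obtain c where "c \<in> cyclic_code S" "\<forall>i\<in>?I. c i = v i"
          using cyclic_code_extend by blast
        moreover have "restrict c ?I = v"
          using v calculation(2) by (intro PiE_ext) auto
        ultimately show "v \<in> (\<lambda>c. restrict c ?I) ` cyclic_code S"
          by blast
      qed
    qed
  qed
  then show ?thesis
    by (simp add: bij_betw_same_card card_PiE card_subfield_q)
qed

lemma check_positions_cyclic_code: "check_positions q {..<n} (cyclic_code S) J"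
  unfolding check_positions_def information_set_def
  using J_sub card_cyclic_code cyclic_code_extend by blast

end

end

locale low_weight_exponents =
  fixes q a b :: nat
  assumes q_gt_2: "2 < q" and a_pos: "0 < a" and b_ge_2: "2 \<le> b"
begin

abbreviation P :: nat where "P \<equiv> tri (a - 1)"

abbreviation rows :: nat where "rows \<equiv> tri (a - 1) + 2 * a"

abbreviation W :: "nat set" where "W \<equiv> {s. 0 < s \<and> s < q ^ (a * b) - 1 \<and> wt_q q s < 3}"

definition row_len :: "nat \<Rightarrow> nat" where
  "row_len k = (if k < P then b ^ 2 else if k < P + a then tri b else b)"

text \<open>The three blocks \<open>\<gamma>\<^sub>1, \<gamma>\<^sub>2, \<gamma>\<^sub>3\<close> of \<open>\<Gamma>\<close>: row \<open>k < P\<close> stands for the pair \<open>u < v < a\<close> with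
  \<open>k = tri (v - 1) + u\<close>, row \<open>P + u\<close> for \<open>u\<close> taken twice and row \<open>P + a + u\<close> for \<open>u\<close> taken once.
  The column \<open>t\<close> lists the quotients \<open>z, w < b\<close> of the exponents \<open>u + a z\<close>, \<open>v + a w\<close> by \<open>a\<close>:
  as \<open>t = z b + w\<close>, as \<open>t = tri w + z\<close> with \<open>z \<le> w\<close>, or as \<open>t = z\<close>, respectively.\<close>

definition exponent :: "nat \<Rightarrow> nat \<Rightarrow> nat" where
  "exponent k t =
     (if k < P then q ^ (fst (untri k) + a * (t div b)) + q ^ (snd (untri k) + 1 + a * (t mod b))
      else if k < P + a then q ^ (k - P + a * fst (untri t)) + q ^ (k - P + a * snd (untri t))
      else q ^ (k - P - a + a * t))"

definition residue :: "nat \<Rightarrow> nat" where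
  "residue k =
     (if k < P then q ^ fst (untri k) + q ^ (snd (untri k) + 1)
      else if k < P + a then q ^ (k - P) + q ^ (k - P)
      else q ^ (k - P - a))"

lemma exponent_pair:
  "k < P \<Longrightarrow> exponent k t = q ^ (fst (untri k) + a * (t div b)) + q ^ (snd (untri k) + 1 + a * (t mod b))"
  by (simp add: exponent_def)

lemma exponent_double:
  "P \<le> k \<Longrightarrow> k < P + a \<Longrightarrow> exponent k t = q ^ (k - P + a * fst (untri t)) + q ^ (k - P + a * snd (untri t))"
  by (simp add: exponent_def)

lemma exponent_single: "P + a \<le> k \<Longrightarrow> exponent k t = q ^ (k - P - a + a * t)"
  by (simp add: exponent_def)

lemma residue_pair: "k < P \<Longrightarrow> residue k = q ^ fst (untri k) + q ^ (snd (untri k) + 1)"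
  by (simp add: residue_def)

lemma residue_double: "P \<le> k \<Longrightarrow> k < P + a \<Longrightarrow> residue k = q ^ (k - P) + q ^ (k - P)"
  by (simp add: residue_def)

lemma residue_single: "P + a \<le> k \<Longrightarrow> residue k = q ^ (k - P - a)"
  by (simp add: residue_def)

lemma untri_pair: "k < P \<Longrightarrow> fst (untri k) < snd (untri k) + 1 \<and> snd (untri k) + 1 < a"
  using untri[of k] tri_add_less_tri_iff[of "fst (untri k)" "snd (untri k)" "a - 1"] a_pos by auto

lemma untri_tri_b: "t < tri b \<Longrightarrow> fst (untri t) \<le> snd (untri t) \<and> snd (untri t) < b"
  using untri[of t] tri_add_less_tri_iff[of "fst (untri t)" "snd (untri t)" b] by auto

lemma row_len_antimono: "k \<le> k' \<Longrightarrow> row_len k' \<le> row_len k"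
  using tri_bounds[of b] by (auto simp: row_len_def)

lemma Gamma_set_eq: "Gamma_set a b = {(k, t). k < rows \<and> t < row_len k}"
proof -
  have "a * (a - 1) div 2 = P" "b * (b + 1) div 2 = tri b"
    using a_pos by (simp_all add: tri_eq mult.commute)
  moreover have "a * (a + 1) = a * (a - 1) + 2 * a" "a * (a + 3) = a * (a - 1) + 2 * (2 * a)"
    using a_pos by (cases a; simp add: algebra_simps)+
  ultimately have "a * (a + 1) div 2 = P + a" "a * (a + 3) div 2 = rows"
    by simp_all
  then show ?thesis
    unfolding Gamma_set_def row_len_def
    using \<open>a * (a - 1) div 2 = P\<close> \<open>b * (b + 1) div 2 = tri b\<close> tri_bounds[of b]
    by (auto split: if_splits)
qed

lemma Gamma_set_eq_Sigma: "Gamma_set a b = Sigma {..<rows} (\<lambda>k. {..<row_len k})"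
  by (auto simp: Gamma_set_eq)

lemma exponent_mod: "exponent k t mod (q ^ a - 1) = residue k mod (q ^ a - 1)"
proof -
  have shift: "q ^ (u + a * z) mod (q ^ a - 1) = q ^ u mod (q ^ a - 1)" for u z
    using q_gt_2 by (intro power_add_mult_mod) simp
  have shift2: "(q ^ (u + a * z) + q ^ (v + a * w)) mod (q ^ a - 1) = (q ^ u + q ^ v) mod (q ^ a - 1)"
    for u v z w
    by (metis mod_add_cong shift)
  consider "k < P" | "P \<le> k" "k < P + a" | "P + a \<le> k"
    by linarith
  then show ?thesis
    by cases (simp_all only: exponent_pair exponent_double exponent_single
        residue_pair residue_double residue_single shift shift2)
qed

lemma residue_bounds: "k < rows \<Longrightarrow> residue k \<in> {1..q ^ a - 1}"
proof -
  assume "k < rows"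
  have "0 < residue k"
    using q_gt_2 by (simp add: residue_def)
  moreover consider "k < P" | "P \<le> k" "k < P + a" | "P + a \<le> k"
    by linarith
  then have "residue k \<le> q ^ a - 1"
  proof cases
    case 1
    then show ?thesis
      using untri_pair[OF 1] power_add_power_le[OF q_gt_2, of "fst (untri k)" a "snd (untri k) + 1"]
      by (simp add: residue_pair)
  next
    case 2
    then show ?thesis
      using power_add_power_le[OF q_gt_2, of "k - P" a "k - P"] by (simp add: residue_double)
  next
    case 3
    then have "q ^ (k - P - a) < q ^ a"
      using \<open>k < rows\<close> q_gt_2 by (intro power_strict_increasing) auto
    then show ?thesis
      using 3 by (simp add: residue_single)
  qed
  ultimately show ?thesis
    by simp
qed

lemma residue_double_inj:
  assumes "P \<le> k" "k < P + a" "P \<le> k'" "k' < P + a" "residue k = residue k'"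
  shows "k = k'"
proof -
  have "q ^ (k - P) + q ^ (k - P) = q ^ (k' - P) + q ^ (k' - P)"
    using assms by (simp add: residue_double)
  then have "q ^ (k - P) = q ^ (k' - P)"
    by linarith
  then have "k - P = k' - P"
    using q_gt_2 by (simp add: power_inject_exp)
  then show ?thesis
    using assms by linarith
qed

lemma residue_pair_inj:
  assumes "k < P" "k' < P" "residue k = residue k'"
  shows "k = k'"
proof -
  have eq: "q ^ fst (untri k) + q ^ (snd (untri k) + 1) = q ^ fst (untri k') + q ^ (snd (untri k') + 1)"
    using assms by (simp only: residue_pair)
  have "fst (untri k) = fst (untri k') \<and> snd (untri k) + 1 = snd (untri k') + 1"
    by (rule power_add_power_inject[OF q_gt_2 _ _ eq])
      (use untri_pair[OF assms(1)] untri_pair[OF assms(2)] in auto)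
  then have "untri k = untri k'"
    by (simp add: prod_eq_iff)
  then show ?thesis
    by (metis untri(2))
qed

lemma residue_single_inj:
  assumes "P + a \<le> k" "P + a \<le> k'" "residue k = residue k'"
  shows "k = k'"
proof -
  have "q ^ (k - P - a) = q ^ (k' - P - a)"
    using assms by (simp only: residue_single)
  then have "k - P - a = k' - P - a"
    using q_gt_2 by (simp add: power_inject_exp)
  then show ?thesis
    using assms by linarith
qed

lemma residue_pair_neq_double:
  assumes "k < P" "P \<le> k'" "k' < P + a"
  shows "residue k \<noteq> residue k'"
proof
  assume "residue k = residue k'"
  then have "q ^ fst (untri k) + q ^ (snd (untri k) + 1) = q ^ (k' - P) + q ^ (k' - P)"
    using assms by (simp only: residue_pair residue_double)
  from power_add_power_eq_cases[OF q_gt_2 this] have "fst (untri k) = snd (untri k) + 1"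
    by simp
  then show False
    using untri_pair[OF assms(1)] by simp
qed

lemma residue_single_neq:
  assumes "P + a \<le> k" "k' < P + a"
  shows "residue k \<noteq> residue k'"
proof -
  obtain x y where "residue k' = q ^ x + q ^ y"
  proof (cases "k' < P")
    case True
    then show ?thesis
      using that[of "fst (untri k')" "snd (untri k') + 1"] by (simp only: residue_pair)
  next
    case False
    then show ?thesis
      using that[of "k' - P" "k' - P"] assms(2) by (simp only: residue_double not_less)
  qed
  then show ?thesis
    using assms(1) power_neq_power_add_power[OF q_gt_2] by (simp only: residue_single) simp
qed

lemma residue_inj: "inj_on residue {..<rows}"
proof (rule inj_onI)
  fix k k' assume "residue k = residue k'"
  then show "k = k'"
    using residue_pair_inj[of k k'] residue_double_inj[of k k'] residue_single_inj[of k k']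
      residue_pair_neq_double[of k k'] residue_pair_neq_double[of k' k]
      residue_single_neq[of k k'] residue_single_neq[of k' k]
    by (smt (verit) not_less trans_less_add1)
qed

lemma residue_mod_inj: "inj_on (\<lambda>k. residue k mod (q ^ a - 1)) {..<rows}"
proof (rule inj_onI)
  fix k k' assume k: "k \<in> {..<rows}" "k' \<in> {..<rows}"
    and "residue k mod (q ^ a - 1) = residue k' mod (q ^ a - 1)"
  then have "residue k = residue k'"
    using mod_eq_imp_eq_atLeastAtMost residue_bounds by blast
  then show "k = k'"
    using residue_inj k by (auto dest: inj_onD)
qed

lemma rows_le: "rows \<le> q ^ a - 1"
proof -
  have "card (residue ` {..<rows}) \<le> card {1..q ^ a - 1}"
    using residue_bounds by (intro card_mono) auto
  then show ?thesis
    using card_image[OF residue_inj] by simp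
qed

lemma mem_Gamma_set_iff: "(k, t) \<in> Gamma_set a b \<longleftrightarrow> k < rows \<and> t < row_len k"
  by (simp add: Gamma_set_eq)

lemma ab_ge_2: "2 \<le> a * b"
  using a_pos b_ge_2 mult_le_mono[of 1 a 2 b] by simp

lemma power_add_power_in_W: "x < a * b \<Longrightarrow> y < a * b \<Longrightarrow> q ^ x + q ^ y \<in> W"
  using power_add_power_less[OF q_gt_2 _ _ ab_ge_2] wt_q_power_add_power[OF q_gt_2] q_gt_2 by simp

lemma power_in_W: "x < a * b \<Longrightarrow> q ^ x \<in> W"
  using power_add_power_less[OF q_gt_2 _ _ ab_ge_2, of x x] wt_q_power[of q x] q_gt_2 by simp

lemma exponent_in_W:
  assumes "(k, t) \<in> Gamma_set a b"
  shows "exponent k t \<in> W"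
proof -
  have k: "k < rows" and t: "t < row_len k"
    using assms by (simp_all add: mem_Gamma_set_iff)
  consider "k < P" | "P \<le> k" "k < P + a" | "P + a \<le> k"
    by linarith
  then show ?thesis
  proof cases
    case 1
    then have "t < b * b"
      using t by (simp add: row_len_def power2_eq_square)
    then have "t div b < b" "t mod b < b"
      using b_ge_2 by (simp_all add: div_less_iff_less_mult)
    then show ?thesis
      unfolding exponent_pair[OF 1]
      by (intro power_add_power_in_W add_mult_less_mult) (use untri_pair[OF 1] in auto)
  next
    case 2
    then have "t < tri b"
      using t by (simp add: row_len_def)
    then show ?thesis
      unfolding exponent_double[OF 2]
      by (intro power_add_power_in_W add_mult_less_mult) (use 2 untri_tri_b[OF \<open>t < tri b\<close>] in auto)
  next
    case 3
    then have "t < b"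
      using t by (simp add: row_len_def)
    then show ?thesis
      unfolding exponent_single[OF 3]
      by (intro power_in_W add_mult_less_mult) (use 3 k in auto)
  qed
qed

lemma exponent_pair_inj:
  assumes "k < P" and eq: "exponent k t = exponent k t'"
  shows "t = t'"
proof -
  define u v where "u = fst (untri k)" and "v = snd (untri k) + 1"
  have "u < v" "v < a"
    using untri_pair[OF \<open>k < P\<close>] by (simp_all add: u_def v_def)
  have "q ^ (u + a * (t div b)) + q ^ (v + a * (t mod b)) =
      q ^ (u + a * (t' div b)) + q ^ (v + a * (t' mod b))"
    using eq by (simp only: exponent_pair[OF \<open>k < P\<close>] u_def v_def)
  from power_add_power_eq_cases[OF q_gt_2 this]
  show ?thesis
  proof
    assume "u + a * (t div b) = u + a * (t' div b) \<and> v + a * (t mod b) = v + a * (t' mod b)"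
    then have "t div b = t' div b" "t mod b = t' mod b"
      using a_pos by simp_all
    have "t = t div b * b + t mod b"
      by simp
    also have "\<dots> = t'"
      using \<open>t div b = t' div b\<close> \<open>t mod b = t' mod b\<close> by simp
    finally show ?thesis .
  next
    \<comment> \<open>Swapping the two powers is impossible: their exponents differ modulo \<open>a\<close>.\<close>
    assume "u + a * (t div b) = v + a * (t' mod b) \<and> v + a * (t mod b) = u + a * (t' div b)"
    then have "(u + a * (t div b)) mod a = (v + a * (t' mod b)) mod a"
      by simp
    then show ?thesis
      using \<open>u < v\<close> \<open>v < a\<close> by simp
  qed
qed

lemma exponent_double_inj:
  assumes k: "P \<le> k" "k < P + a" and "t < tri b" "t' < tri b"
    and eq: "exponent k t = exponent k t'"
  shows "t = t'"
proof -
  have le: "k - P + a * fst (untri t) \<le> k - P + a * snd (untri t)"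
    "k - P + a * fst (untri t') \<le> k - P + a * snd (untri t')"
    using untri_tri_b \<open>t < tri b\<close> \<open>t' < tri b\<close> by simp_all
  have "q ^ (k - P + a * fst (untri t)) + q ^ (k - P + a * snd (untri t)) =
      q ^ (k - P + a * fst (untri t')) + q ^ (k - P + a * snd (untri t'))"
    using eq by (simp only: exponent_double[OF k])
  from power_add_power_inject[OF q_gt_2 le this]
  have "fst (untri t) = fst (untri t') \<and> snd (untri t) = snd (untri t')"
    using a_pos by simp
  then have "untri t = untri t'"
    by (simp add: prod_eq_iff)
  then show ?thesis
    by (metis untri(2))
qed

lemma exponent_single_inj:
  assumes "P + a \<le> k" "exponent k t = exponent k t'"
  shows "t = t'"
proof -
  have "q ^ (k - P - a + a * t) = q ^ (k - P - a + a * t')"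
    using assms by (simp only: exponent_single)
  then have "k - P - a + a * t = k - P - a + a * t'"
    using q_gt_2 by (simp add: power_inject_exp)
  then show ?thesis
    using a_pos by simp
qed

lemma exponent_row_inj:
  assumes "(k, t) \<in> Gamma_set a b" "(k, t') \<in> Gamma_set a b" "exponent k t = exponent k t'"
  shows "t = t'"
proof -
  consider "k < P" | "P \<le> k" "k < P + a" | "P + a \<le> k"
    by linarith
  then show ?thesis
  proof cases
    case 2
    then have "t < tri b" "t' < tri b"
      using assms by (simp_all add: mem_Gamma_set_iff row_len_def)
    then show ?thesis
      using exponent_double_inj 2 assms(3) by blast
  qed (use assms exponent_pair_inj exponent_single_inj in blast)+
qed

lemma exponent_inj: "inj_on (case_prod exponent) (Gamma_set a b)"
proof (rule inj_onI)
  fix x y assume "x \<in> Gamma_set a b" "y \<in> Gamma_set a b" "case_prod exponent x = case_prod exponent y"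
  moreover obtain k t k' t' where "x = (k, t)" "y = (k', t')"
    by fastforce
  ultimately have kt: "(k, t) \<in> Gamma_set a b" and kt': "(k', t') \<in> Gamma_set a b"
    and eq: "exponent k t = exponent k' t'"
    by simp_all
  have "residue k mod (q ^ a - 1) = residue k' mod (q ^ a - 1)"
    using eq by (simp only: exponent_mod[of k t, symmetric] exponent_mod[of k' t', symmetric])
  then have "k = k'"
    by (rule inj_onD[OF residue_mod_inj]) (use kt kt' in \<open>simp_all add: mem_Gamma_set_iff\<close>)
  then have "t = t'"
    using exponent_row_inj[of k t t'] kt kt' eq by simp
  then show "x = y"
    using \<open>k = k'\<close> \<open>x = (k, t)\<close> \<open>y = (k', t')\<close> by simp
qed

lemma exponent_hits_power:
  assumes "x < a * b"
  shows "q ^ x \<in> case_prod exponent ` Gamma_set a b"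
proof -
  define k t where "k = P + a + x mod a" and "t = x div a"
  have "(k, t) \<in> Gamma_set a b"
    using assms a_pos
    by (simp add: k_def t_def mem_Gamma_set_iff row_len_def div_less_iff_less_mult mult.commute)
  moreover have "exponent k t = q ^ x"
    by (simp add: k_def t_def exponent_single)
  ultimately show ?thesis
    by (metis case_prod_conv image_eqI)
qed

lemma exponent_hits_pair:
  assumes "u < v" "v < a" "z < b" "w < b"
  shows "q ^ (u + a * z) + q ^ (v + a * w) \<in> case_prod exponent ` Gamma_set a b"
proof -
  define k t where "k = tri (v - 1) + u" and "t = z * b + w"
  have "u \<le> v - 1"
    using assms by simp
  then have "untri k = (u, v - 1)" and "k < P"
    using assms tri_add_less_tri_iff[of u "v - 1" "a - 1"] by (simp_all add: k_def untri_tri_add)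
  moreover have "t div b = z" "t mod b = w"
    using assms by (simp_all add: t_def)
  moreover have "t < b ^ 2"
    using add_mult_less_mult[of w b z b] assms by (simp add: t_def power2_eq_square mult.commute)
  ultimately have "(k, t) \<in> Gamma_set a b" "exponent k t = q ^ (u + a * z) + q ^ (v + a * w)"
    using assms by (simp_all add: mem_Gamma_set_iff row_len_def exponent_pair)
  then show ?thesis
    by (metis case_prod_conv image_eqI)
qed

lemma exponent_hits_double:
  assumes "u < a" "z \<le> w" "w < b"
  shows "q ^ (u + a * z) + q ^ (u + a * w) \<in> case_prod exponent ` Gamma_set a b"
proof -
  define k t where "k = P + u" and "t = tri w + z"
  have "untri t = (z, w)" "t < tri b"
    using assms tri_add_less_tri_iff[of z w b] by (simp_all add: t_def untri_tri_add)
  then have "(k, t) \<in> Gamma_set a b" "exponent k t = q ^ (u + a * z) + q ^ (u + a * w)"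
    using assms by (simp_all add: k_def mem_Gamma_set_iff row_len_def exponent_double)
  then show ?thesis
    by (metis case_prod_conv image_eqI)
qed

lemma exponent_bound_of_W: "s \<in> W \<Longrightarrow> q ^ x \<le> s \<Longrightarrow> x < a * b"
proof -
  assume "s \<in> W" "q ^ x \<le> s"
  then have "q ^ x < q ^ (a * b)"
    by (simp del: power_mult) linarith
  then show ?thesis
    using q_gt_2 by (simp add: power_less_imp_less_exp)
qed

lemma exponent_surj: "W \<subseteq> case_prod exponent ` Gamma_set a b"
proof
  fix s assume s: "s \<in> W"
  note below = exponent_bound_of_W[OF s]
  have "0 < s" "wt_q q s \<le> 2"
    using s by auto
  from wt_q_le_2_cases[OF q_gt_2 this]
  show "s \<in> case_prod exponent ` Gamma_set a b"
  proof (elim disjE exE conjE)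
    fix x assume "s = q ^ x"
    then show ?thesis
      using below exponent_hits_power by simp
  next
    fix x y assume "x \<le> y" and sxy: "s = q ^ x + q ^ y"
    define u v z w where "u = x mod a" and "v = y mod a" and "z = x div a" and "w = y div a"
    have "x < a * b" "y < a * b"
      using below sxy by simp_all
    then have uv: "u < a" "v < a" "z < b" "w < b"
      using a_pos by (simp_all add: u_def v_def z_def w_def div_less_iff_less_mult mult.commute)
    have "z \<le> w"
      using \<open>x \<le> y\<close> by (simp add: z_def w_def div_le_mono)
    have s_eq: "s = q ^ (u + a * z) + q ^ (v + a * w)"
      by (simp add: sxy u_def v_def z_def w_def)
    consider "u = v" | "u < v" | "v < u"
      by linarith
    then show ?thesis
    proof cases
      case 1
      then show ?thesis
        using exponent_hits_double[of u z w] uv \<open>z \<le> w\<close> s_eq by simp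
    next
      case 2
      then show ?thesis
        using exponent_hits_pair uv s_eq by simp
    next
      case 3
      then show ?thesis
        using exponent_hits_pair[of v u w z] uv s_eq by (simp add: add.commute)
    qed
  qed
qed

lemma bij_betw_exponent: "bij_betw (case_prod exponent) (Gamma_set a b) W"
  unfolding bij_betw_def using exponent_inj exponent_in_W exponent_surj by auto

end

locale cyclic_product_iso =
  fixes N r1 r2 :: nat and T :: "nat \<Rightarrow> nat \<times> nat"
  assumes T_bij: "bij_betw T {..<N} ({..<r1} \<times> {..<r2})"
    and T_hom: "\<forall>i<N. \<forall>j<N. T ((i + j) mod N) =
                  ((fst (T i) + fst (T j)) mod r1, (snd (T i) + snd (T j)) mod r2)"
    and r1_gt_1: "1 < r1" and r2_gt_1: "1 < r2"
begin

lemma N_eq: "N = r1 * r2"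
  using bij_betw_same_card[OF T_bij] by simp

lemma N_pos: "0 < N"
  using r1_gt_1 r2_gt_1 by (simp add: N_eq)

lemma T_range: "i < N \<Longrightarrow> fst (T i) < r1 \<and> snd (T i) < r2"
  using bij_betw_apply[OF T_bij, of i] by (auto simp: mem_Times_iff)

lemma T_0: "T 0 = (0, 0)"
proof -
  have "T 0 = ((fst (T 0) + fst (T 0)) mod r1, (snd (T 0) + snd (T 0)) mod r2)"
    using T_hom N_pos by (metis add_0 mod_0)
  moreover have "fst (T 0) < r1" "snd (T 0) < r2"
    using T_range[OF N_pos] by simp_all
  ultimately show ?thesis
    using add_self_mod_eq_self[of "fst (T 0)" r1] add_self_mod_eq_self[of "snd (T 0)" r2]
    by (metis prod.collapse prod.inject)
qed

lemma T_mult: "i < N \<Longrightarrow> T ((c * i) mod N) = ((c * fst (T i)) mod r1, (c * snd (T i)) mod r2)"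
proof (induction c)
  case 0
  then show ?case
    using T_0 by simp
next
  case (Suc c)
  have "(Suc c * i) mod N = ((c * i) mod N + i) mod N"
    by (simp add: mod_add_left_eq add.commute[of i])
  then have "T ((Suc c * i) mod N) =
      ((fst (T ((c * i) mod N)) + fst (T i)) mod r1, (snd (T ((c * i) mod N)) + snd (T i)) mod r2)"
    using T_hom Suc.prems N_pos by simp
  then show ?case
    using Suc by (simp add: mod_add_left_eq mod_add_right_eq add.commute)
qed

lemma T_inj_iff: "i < N \<Longrightarrow> j < N \<Longrightarrow> T i = T j \<longleftrightarrow> i = j"
  using bij_betw_imp_inj_on[OF T_bij] by (auto dest: inj_onD)

definition e1 :: nat where "e1 = (SOME i. i < N \<and> T i = (1, 0))"

definition e2 :: nat where "e2 = (SOME i. i < N \<and> T i = (0, 1))"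

lemma e1: "e1 < N" "T e1 = (1, 0)"
proof -
  have "(1, 0) \<in> T ` {..<N}"
    using bij_betw_imp_surj_on[OF T_bij] r1_gt_1 r2_gt_1 by auto
  then have "\<exists>i. i < N \<and> T i = (1, 0)"
    by force
  then show "e1 < N" "T e1 = (1, 0)"
    unfolding e1_def by (metis (mono_tags, lifting) someI_ex)+
qed

lemma e2: "e2 < N" "T e2 = (0, 1)"
proof -
  have "(0, 1) \<in> T ` {..<N}"
    using bij_betw_imp_surj_on[OF T_bij] r1_gt_1 r2_gt_1 by auto
  then have "\<exists>i. i < N \<and> T i = (0, 1)"
    by force
  then show "e2 < N" "T e2 = (0, 1)"
    unfolding e2_def by (metis (mono_tags, lifting) someI_ex)+
qed

lemma mult_e1_mod_eq_iff: "(x * e1) mod N = (y * e1) mod N \<longleftrightarrow> x mod r1 = y mod r1"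
  using T_inj_iff[of "(x * e1) mod N" "(y * e1) mod N"] T_mult[of e1 x] T_mult[of e1 y] e1 N_pos
  by (simp add: mult.commute)

lemma mult_e2_mod_eq_iff: "(x * e2) mod N = (y * e2) mod N \<longleftrightarrow> x mod r2 = y mod r2"
  using T_inj_iff[of "(x * e2) mod N" "(y * e2) mod N"] T_mult[of e2 x] T_mult[of e2 y] e2 N_pos
  by (simp add: mult.commute)

lemma T_decomp: "i < N \<Longrightarrow> i = (fst (T i) * e1 + snd (T i) * e2) mod N"
proof -
  assume "i < N"
  let ?j = "(fst (T i) * e1 + snd (T i) * e2) mod N"
  have "T ?j = T (((fst (T i) * e1) mod N + (snd (T i) * e2) mod N) mod N)"
    by (simp add: mod_add_eq)
  also have "\<dots> = (fst (T i), snd (T i))"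
    using T_hom T_mult[of e1 "fst (T i)"] T_mult[of e2 "snd (T i)"] e1 e2 T_range[OF \<open>i < N\<close>] N_pos
    by simp
  finally have "T ?j = T i"
    by simp
  then show ?thesis
    using T_inj_iff[of ?j i] \<open>i < N\<close> N_pos by simp
qed

end

lemma low_weight_exponents_of_factorization:
  assumes "2 < q" "1 \<le> m" "q ^ m - 1 = r1 * r2" "1 < r1" "1 < r2" "r1 = q ^ a - 1" "m = a * b"
  shows "low_weight_exponents q a b"
proof
  show "2 < q" "0 < a"
    using assms by (auto intro: gr0I)
  show "2 \<le> b"
  proof (rule ccontr)
    assume "\<not> 2 \<le> b"
    then have "b = 1"
      using assms(2,7) by (cases b) auto
    then show False
      using assms by simp
  qed
qed

locale grm_setting =
  finite_field_generator q m \<alpha> + cyclic_product_iso "q ^ m - 1" r1 r2 T + low_weight_exponents q a b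
  for q m r1 r2 a b :: nat and \<alpha> :: "'K::{finite,field}" and T :: "nat \<Rightarrow> nat \<times> nat" +
  assumes coprime_r1_r2: "coprime r1 r2"
    and r1_eq: "r1 = q ^ a - 1"
    and m_eq: "m = a * b"
begin

abbreviation J :: "nat set" where "J \<equiv> {i \<in> {..<n}. T i \<in> Gamma_set a b}"

definition \<beta> :: 'K where "\<beta> = \<alpha> ^ e1"

definition \<gamma> :: 'K where "\<gamma> = \<alpha> ^ e2"

lemma \<beta>_power_eq_iff: "\<beta> ^ x = \<beta> ^ y \<longleftrightarrow> x mod r1 = y mod r1"
  using mult_e1_mod_eq_iff[of x y]
  by (simp add: \<beta>_def \<alpha>_power_eq_iff n_def mult.commute flip: power_mult)

lemma \<gamma>_power_eq_iff: "\<gamma> ^ x = \<gamma> ^ y \<longleftrightarrow> x mod r2 = y mod r2"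
  using mult_e2_mod_eq_iff[of x y]
  by (simp add: \<gamma>_def \<alpha>_power_eq_iff n_def mult.commute flip: power_mult)

lemma \<alpha>_power_split: "i < n \<Longrightarrow> \<alpha> ^ (i * s) = (\<beta> ^ s) ^ fst (T i) * (\<gamma> ^ s) ^ snd (T i)"
proof -
  assume "i < n"
  then have "(i * s) mod n = ((fst (T i) * e1 + snd (T i) * e2) * s) mod n"
    using T_decomp[of i] by (metis mod_mult_left_eq n_def)
  then have "\<alpha> ^ (i * s) = \<alpha> ^ ((fst (T i) * e1 + snd (T i) * e2) * s)"
    by (simp only: \<alpha>_power_eq_iff)
  then show ?thesis
    by (simp add: \<beta>_def \<gamma>_def algebra_simps power_add flip: power_mult)
qed

lemma W_eq: "W = {s. 0 < s \<and> s < n \<and> wt_q q s < 3}"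
  unfolding n_def by (simp add: m_eq)

lemma row_len_le_r2: "k < rows \<Longrightarrow> row_len k \<le> r2"
proof -
  assume "k < rows"
  have "inj_on (\<lambda>t. exponent k t div r1) {..<row_len k}"
  proof (rule inj_onI)
    fix t t' assume "t \<in> {..<row_len k}" "t' \<in> {..<row_len k}" "exponent k t div r1 = exponent k t' div r1"
    moreover have "exponent k t mod r1 = exponent k t' mod r1"
      using exponent_mod[of k t] exponent_mod[of k t'] r1_eq by simp
    ultimately have "exponent k t = exponent k t'"
      by (metis div_mult_mod_eq)
    then show "t = t'"
      using exponent_row_inj[of k t t'] \<open>k < rows\<close> \<open>t \<in> _\<close> \<open>t' \<in> _\<close> by (simp add: mem_Gamma_set_iff)
  qed
  moreover have "(\<lambda>t. exponent k t div r1) ` {..<row_len k} \<subseteq> {..<r2}"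
  proof
    fix x assume "x \<in> (\<lambda>t. exponent k t div r1) ` {..<row_len k}"
    then obtain t where "t < row_len k" "x = exponent k t div r1"
      by blast
    moreover have "exponent k t < r1 * r2"
      using exponent_in_W[of k t] \<open>k < rows\<close> \<open>t < row_len k\<close> N_eq
      by (simp add: mem_Gamma_set_iff m_eq)
    ultimately show "x \<in> {..<r2}"
      using r1_gt_1 by (simp add: div_less_iff_less_mult mult.commute)
  qed
  ultimately show ?thesis
    using card_inj_on_le[of _ "{..<row_len k}" "{..<r2}"] by fastforce
qed

lemma bij_betw_T_J: "bij_betw T J (Gamma_set a b)"
proof -
  have "Gamma_set a b \<subseteq> {..<r1} \<times> {..<r2}"
  proof
    fix x assume "x \<in> Gamma_set a b"
    then obtain k t where "x = (k, t)" "k < rows" "t < row_len k"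
      by (cases x) (simp add: mem_Gamma_set_iff)
    then show "x \<in> {..<r1} \<times> {..<r2}"
      using rows_le row_len_le_r2[of k] r1_eq by simp
  qed
  then have "Gamma_set a b \<subseteq> T ` {..<n}"
    using bij_betw_imp_surj_on[OF T_bij] by (simp add: n_def)
  then have "T ` J = Gamma_set a b"
    by blast
  moreover have "inj_on T J"
    using bij_betw_imp_inj_on[OF T_bij] by (rule inj_on_subset) (auto simp: n_def)
  ultimately show ?thesis
    by (simp add: bij_betw_def)
qed

lemma exponent_less_n: "(k, t) \<in> Gamma_set a b \<Longrightarrow> exponent k t < n"
  using exponent_in_W W_eq by auto

lemma exponent_power_eq_iff:
  assumes "(k, t) \<in> Gamma_set a b" "(k, t') \<in> Gamma_set a b"
  shows "\<gamma> ^ exponent k t = \<gamma> ^ exponent k t' \<longleftrightarrow> t = t'"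
proof
  assume "\<gamma> ^ exponent k t = \<gamma> ^ exponent k t'"
  \<comment> \<open>Both exponents are congruent to \<open>residue k\<close> modulo \<open>r1\<close>, so by the Chinese remainder theorem
    they agree modulo \<open>n = r1 r2\<close>.\<close>
  then have "[exponent k t = exponent k t'] (mod r2)"
    by (simp add: \<gamma>_power_eq_iff cong_def)
  moreover have "[exponent k t = exponent k t'] (mod r1)"
    using exponent_mod[of k t] exponent_mod[of k t'] r1_eq by (simp add: cong_def)
  ultimately have "[exponent k t = exponent k t'] (mod n)"
    using coprime_cong_mult_nat[OF _ _ coprime_r1_r2] N_eq by (simp add: n_def)
  then have "exponent k t = exponent k t'"
    using exponent_less_n[OF assms(1)] exponent_less_n[OF assms(2)] by (simp add: cong_def)
  then show "t = t'"
    using exponent_row_inj assms by blast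
qed simp

lemma check_sum_eq_staircase:
  assumes "j \<in> J"
  shows "(\<Sum>s\<in>W. x s * \<alpha> ^ (j * s)) = (\<Sum>k<rows. \<Sum>t<row_len k.
           x (exponent k t) * (\<beta> ^ residue k) ^ fst (T j) * (\<gamma> ^ exponent k t) ^ snd (T j))"
proof -
  have pointwise: "\<alpha> ^ (j * exponent k t) = (\<beta> ^ residue k) ^ fst (T j) * (\<gamma> ^ exponent k t) ^ snd (T j)"
    for k t
  proof -
    have "\<beta> ^ exponent k t = \<beta> ^ residue k"
      using exponent_mod[of k t] r1_eq by (simp add: \<beta>_power_eq_iff)
    then show ?thesis
      using \<alpha>_power_split[of j "exponent k t"] assms by simp
  qed
  have "(\<Sum>s\<in>W. x s * \<alpha> ^ (j * s)) =
      (\<Sum>(k, t)\<in>Gamma_set a b. x (exponent k t) * \<alpha> ^ (j * exponent k t))"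
    using sum.reindex_bij_betw[OF bij_betw_exponent, of "\<lambda>s. x s * \<alpha> ^ (j * s)"]
    by (simp add: case_prod_beta)
  also have "\<dots> = (\<Sum>(k, t)\<in>Gamma_set a b.
      x (exponent k t) * (\<beta> ^ residue k) ^ fst (T j) * (\<gamma> ^ exponent k t) ^ snd (T j))"
    by (simp only: pointwise mult.assoc)
  also have "\<dots> = (\<Sum>k<rows. \<Sum>t<row_len k.
      x (exponent k t) * (\<beta> ^ residue k) ^ fst (T j) * (\<gamma> ^ exponent k t) ^ snd (T j))"
    unfolding Gamma_set_eq_Sigma by (rule sum.Sigma[symmetric]) auto
  finally show ?thesis .
qed

lemma square_nonsingular_W_J: "square_nonsingular (\<lambda>s j. \<alpha> ^ (j * s)) W J"
  unfolding square_nonsingular_def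
proof (intro conjI allI impI ballI)
  show "finite W" "finite J"
    by (simp_all add: W_eq)
  show "card W = card J"
    using bij_betw_same_card[OF bij_betw_exponent] bij_betw_same_card[OF bij_betw_T_J] by simp
  fix x s assume eqs: "\<forall>j\<in>J. (\<Sum>s\<in>W. x s * \<alpha> ^ (j * s)) = 0" and "s \<in> W"
  have "\<forall>k<rows. \<forall>t<row_len k. x (exponent k t) = 0"
  proof (rule staircase_vandermonde_coeffs_eq_0[where B = "\<lambda>k. \<beta> ^ residue k"
        and C = "\<lambda>k t. \<gamma> ^ exponent k t"])
    show "inj_on (\<lambda>k. \<beta> ^ residue k) {..<rows}"
      using residue_mod_inj r1_eq by (simp add: inj_on_def \<beta>_power_eq_iff)
    show "inj_on (\<lambda>t. \<gamma> ^ exponent k t) {..<row_len k}" if "k < rows" for k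
      using that exponent_power_eq_iff by (simp add: inj_on_def mem_Gamma_set_iff)
    show "row_len k' \<le> row_len k" if "k \<le> k'" for k k'
      using that by (rule row_len_antimono)
    fix j1 j2 assume "j1 < rows" "j2 < row_len j1"
    then have "(j1, j2) \<in> T ` J"
      using bij_betw_imp_surj_on[OF bij_betw_T_J] by (simp add: mem_Gamma_set_iff)
    then obtain j where Tj: "(j1, j2) = T j" and "j \<in> J"
      by (rule imageE)
    then show "(\<Sum>k<rows. \<Sum>t<row_len k.
        x (exponent k t) * (\<beta> ^ residue k) ^ j1 * (\<gamma> ^ exponent k t) ^ j2) = 0"
      using check_sum_eq_staircase[OF \<open>j \<in> J\<close>, of x] eqs by (simp flip: Tj)
  qed
  moreover obtain k t where "(k, t) \<in> Gamma_set a b" "s = exponent k t"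
  proof -
    have "s \<in> case_prod exponent ` Gamma_set a b"
      using exponent_surj \<open>s \<in> W\<close> by (rule subsetD)
    then obtain p where "s = case_prod exponent p" "p \<in> Gamma_set a b"
      by (rule imageE)
    then show ?thesis
      using that by (cases p) simp
  qed
  ultimately show "x s = 0"
    by (simp add: mem_Gamma_set_iff)
qed

lemma W_q_mult_closed: "s \<in> W \<Longrightarrow> (q * s) mod n \<in> W"
proof -
  assume "s \<in> W"
  then have s: "0 < s" "s < n" "wt_q q s < 3"
    unfolding W_eq by simp_all
  then have "wt_q q ((q * s) mod n) = wt_q q s"
    using wt_q_rotate[OF q_gt_1 m_pos, of s] by (simp add: n_def)
  moreover have "wt_q q s \<noteq> 0"
    using s(1) wt_q_eq_0_iff[OF q_gt_1] by simp
  ultimately have "0 < (q * s) mod n" "wt_q q ((q * s) mod n) < 3"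
    using s(3) wt_q_eq_0_iff[OF q_gt_1, of "(q * s) mod n"] by auto
  then show "(q * s) mod n \<in> W"
    unfolding W_eq using n_pos by simp
qed

lemma punctured_GRM_eq_cyclic_code_W: "punctured_GRM q m (m * (q - 1) - 3) \<alpha> = cyclic_code W"
proof -
  have "4 \<le> m * (q - 1)"
    using mult_le_mono[of 2 m 2 "q - 1"] ab_ge_2 q_gt_2 m_eq by simp
  then show ?thesis
    unfolding W_eq by (simp add: punctured_GRM_eq_cyclic_code)
qed

lemma check_positions_J: "check_positions q {..<n} (punctured_GRM q m (m * (q - 1) - 3) \<alpha>) J"
  unfolding punctured_GRM_eq_cyclic_code_W
proof (rule check_positions_cyclic_code)
  show "W \<subseteq> {..<n}"
    unfolding W_eq by auto
  show "(q * s) mod n \<in> W" if "s \<in> W" for s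
    using that by (rule W_q_mult_closed)
  show "J \<subseteq> {..<n}"
    by auto
  show "square_nonsingular (\<lambda>s j. \<alpha> ^ (j * s)) W J"
    by (rule square_nonsingular_W_J)
qed

end

theorem mainTheorem6:
  fixes q m r1 r2 a b :: nat
    and \<alpha> :: "'K::{finite,field}"
    and T :: "nat \<Rightarrow> nat \<times> nat"
  assumes q_pp: "\<exists>p k. prime p \<and> k > 0 \<and> q = p ^ k"
    and q_gt: "q > 2"
    and m_pos: "m \<ge> 1"
    and card_K: "card (UNIV :: 'K set) = q ^ m"
    and n_fact: "q ^ m - 1 = r1 * r2"
    and r1_gt: "r1 > 1" and r2_gt: "r2 > 1"
    and coprime: "coprime r1 r2"
    and r1_def: "r1 = q ^ a - 1"
    and m_ab: "m = a * b"
    and gen: "\<alpha> \<noteq> 0" "\<forall>x::'K. x \<noteq> 0 \<longrightarrow> (\<exists>k. x = \<alpha> ^ k)"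
    and T_bij: "bij_betw T {..< q ^ m - 1} ({..< r1} \<times> {..< r2})"
    and T_hom: "\<forall>i < q ^ m - 1. \<forall>j < q ^ m - 1.
                  T ((i + j) mod (q ^ m - 1)) =
                  ((fst (T i) + fst (T j)) mod r1, (snd (T i) + snd (T j)) mod r2)"
  shows "check_positions q {..< q ^ m - 1}
           (punctured_GRM q m (m * (q - 1) - 3) \<alpha>)
           {i \<in> {..< q ^ m - 1}. T i \<in> Gamma_set a b}"
proof -
  interpret low_weight_exponents q a b
    using low_weight_exponents_of_factorization q_gt m_pos n_fact r1_gt r2_gt r1_def m_ab .
  interpret grm_setting q m r1 r2 a b \<alpha> T
    by unfold_locales (use assms in auto)
  show ?thesis
    using check_positions_J by (simp add: n_def)
qed

end
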